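(* Let $t_1, t_2 \in \mathcal{L}_r$ with $t_1 =_{\mathcal{L}} t_2$. Then for all finite $E \subseteq \mathcal{X}$, $x \in \mathcal{X}$, $S \in \mathbb{N}$: $A(E, x, S)$ is one of the sublevels of $t_1$ if and only if $A(E, x, S)$ is one of the sublevels of $t_2$.
   Context: $\mathcal{X}$ is a countable set of variables; a valuation is $\sigma\colon\mathcal{X}\to\mathbb{N}$. For finite $E\subseteq\mathcal{X}$, $x\in\mathcal{X}$, $S\in\mathbb{N}$, the sublevels $A(E,x,S)$ and $B(E,S)$ have values $[A(E,x,S)]_\sigma = 0$ if some $y\in E$ has $\sigma(y)=0$, and $\sigma(x)+S$ otherwise; $[B(E,S)]_\sigma=0$ if some $y\in E$ has $\sigma(y)=0$, and $S$ otherwise. $\mathcal{L}_s$ is the set of sublevels $A(E,x,S)$ with $x\in E$ and $B(E,S)$ with $S>0$. $t_1\leqslant_{\mathcal{L}} t_2$ (resp. $t_1 =_{\mathcal{L}} t_2$) means $[t_1]_\sigma\le[t_2]_\sigma$ (resp. $=$) for every valuation $\sigma$; $\max$ of a finite family is evaluated pointwise (empty max has value $0$). Two sublevels $u,v$ are incomparable if neither $u\leqslant_{\mathcal{L}} v$ nor $v\leqslant_{\mathcal{L}} u$. A minimal representation is a formal expression $\max(u_1,\ldots,u_n)$ where $\{u_1,\ldots,u_n\}$ is a finite set of elements of $\mathcal{L}_s$ that are pairwise incomparable ($u_i$ and $u_j$ incomparable for $i\ne j$); $\mathcal{L}_r$ is the set of minimal representations, and the $u_i$ are called its sublevels. *)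

theory Defs
  imports Main "HOL-Library.Countable"
begin

datatype 'x sublevel = A "'x set" 'x nat | B "'x set" nat

type_synonym 'x valuation = "'x \<Rightarrow> nat"

fun sl_eval :: "'x sublevel \<Rightarrow> 'x valuation \<Rightarrow> nat" where
  "sl_eval (A E x S) \<sigma> = (if \<exists>y\<in>E. \<sigma> y = 0 then 0 else \<sigma> x + S)"
| "sl_eval (B E S) \<sigma> = (if \<exists>y\<in>E. \<sigma> y = 0 then 0 else S)"

definition in_Ls :: "'x sublevel \<Rightarrow> bool" where
  "in_Ls u \<longleftrightarrow> (case u of
      A E x S \<Rightarrow> finite E \<and> x \<in> E
    | B E S \<Rightarrow> finite E \<and> S > 0)"

definition sl_le :: "'x sublevel \<Rightarrow> 'x sublevel \<Rightarrow> bool" where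
  "sl_le u v \<longleftrightarrow> (\<forall>\<sigma>. sl_eval u \<sigma> \<le> sl_eval v \<sigma>)"

definition incomparable :: "'x sublevel \<Rightarrow> 'x sublevel \<Rightarrow> bool" where
  "incomparable u v \<longleftrightarrow> \<not> sl_le u v \<and> \<not> sl_le v u"

text \<open>A formal expression max(u_1,...,u_n) is represented by its finite set
  of sublevels {u_1,...,u_n}.\<close>
definition max_eval :: "'x sublevel set \<Rightarrow> 'x valuation \<Rightarrow> nat" where
  "max_eval T \<sigma> = Max (insert 0 ((\<lambda>u. sl_eval u \<sigma>) ` T))"

definition in_Lr :: "'x sublevel set \<Rightarrow> bool" where
  "in_Lr T \<longleftrightarrow> finite T \<and> (\<forall>u\<in>T. in_Ls u)
     \<and> (\<forall>u\<in>T. \<forall>v\<in>T. u \<noteq> v \<longrightarrow> incomparable u v)"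

definition Lr_eq :: "'x sublevel set \<Rightarrow> 'x sublevel set \<Rightarrow> bool" where
  "Lr_eq T1 T2 \<longleftrightarrow> (\<forall>\<sigma>. max_eval T1 \<sigma> = max_eval T2 \<sigma>)"

end

theory Submission
  imports Defs
begin

text \<open>Evaluate both representations at a valuation that is 1 on \<open>E\<close>, 0 outside \<open>E\<close> and so large
  at \<open>x\<close> that no constant of a sublevel of \<open>t\<^sub>2\<close> can reach the value of \<open>A E x S\<close>. The maximum of
  \<open>t\<^sub>2\<close> must then be attained by some \<open>A E' x S'\<close> with \<open>E' \<subseteq> E\<close> and \<open>S \<le> S'\<close>. Doing the same
  from \<open>t\<^sub>2\<close> back to \<open>t\<^sub>1\<close> yields \<open>A E'' x S''\<close> in \<open>t\<^sub>1\<close> dominating \<open>A E x S\<close>, and pairwise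
  incomparability forces \<open>E'' = E\<close>, \<open>S'' = S\<close>, hence also \<open>E' = E\<close>, \<open>S' = S\<close>.\<close>

lemma sl_eval_le_max_eval: "finite T \<Longrightarrow> u \<in> T \<Longrightarrow> sl_eval u \<sigma> \<le> max_eval T \<sigma>"
  unfolding max_eval_def by (intro Max_ge) auto

lemma max_eval_attained:
  assumes "finite T" and "max_eval T \<sigma> > 0"
  obtains u where "u \<in> T" and "sl_eval u \<sigma> = max_eval T \<sigma>"
proof -
  have "max_eval T \<sigma> \<in> insert 0 ((\<lambda>u. sl_eval u \<sigma>) ` T)"
    unfolding max_eval_def using assms(1) by (intro Max_in) auto
  then show ?thesis using assms(2) that by auto
qed

lemma Lr_eq_sym: "Lr_eq T1 T2 \<Longrightarrow> Lr_eq T2 T1"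
  unfolding Lr_eq_def by simp

fun sl_const :: "'x sublevel \<Rightarrow> nat" where
  "sl_const (A E x S) = S"
| "sl_const (B E S) = S"

definition peak_valuation :: "'x set \<Rightarrow> 'x \<Rightarrow> nat \<Rightarrow> 'x valuation" where
  "peak_valuation E x h y = (if y = x then h else if y \<in> E then 1 else 0)"

lemma sl_eval_A_peak_valuation:
  "x \<in> E \<Longrightarrow> 0 < h \<Longrightarrow> sl_eval (A E x S) (peak_valuation E x h) = h + S"
  by (auto simp: peak_valuation_def)

lemma peak_valuation_large_imp_A:
  assumes "in_Ls u" and "x \<in> E" and "sl_const u + 1 < h"
    and large: "h + S \<le> sl_eval u (peak_valuation E x h)"
  obtains E' S' where "u = A E' x S'" and "E' \<subseteq> E" and "S \<le> S'"
proof (cases u)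
  case (A E' x' S')
  let ?\<sigma> = "peak_valuation E x h"
  have nonzero: "\<not> (\<exists>y\<in>E'. ?\<sigma> y = 0)"
    using large A assms(3) by (auto split: if_splits)
  then have "E' \<subseteq> E"
    using \<open>x \<in> E\<close> by (auto simp: peak_valuation_def split: if_splits)
  have "x' \<in> E'" using \<open>in_Ls u\<close> A by (simp add: in_Ls_def)
  have "x' = x"
  proof (rule ccontr)
    assume "x' \<noteq> x"
    then have "?\<sigma> x' = 1" using \<open>E' \<subseteq> E\<close> \<open>x' \<in> E'\<close> by (auto simp: peak_valuation_def)
    then show False using large nonzero A assms(3) by simp
  qed
  moreover have "?\<sigma> x = h" by (simp add: peak_valuation_def)
  ultimately have "sl_eval u ?\<sigma> = h + S'" using A nonzero by auto
  then have "S \<le> S'" using large by linarith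
  with A \<open>x' = x\<close> \<open>E' \<subseteq> E\<close> that show ?thesis by blast
next
  case (B E' S')
  then have "sl_eval u (peak_valuation E x h) \<le> S'" by simp
  then show ?thesis using large assms(3) B by simp
qed

lemma A_below_max_eval_imp_dominating_A:
  assumes "finite T" and "\<forall>u\<in>T. in_Ls u" and "x \<in> E"
    and below: "\<forall>\<sigma>. sl_eval (A E x S) \<sigma> \<le> max_eval T \<sigma>"
  obtains E' S' where "A E' x S' \<in> T" and "E' \<subseteq> E" and "S \<le> S'"
proof -
  define h where "h = Max (insert 0 (sl_const ` T)) + 2"
  have const_lt: "sl_const u + 1 < h" if "u \<in> T" for u
    unfolding h_def using \<open>finite T\<close> that by (simp add: le_imp_less_Suc)
  have "0 < h" by (simp add: h_def)
  let ?\<sigma> = "peak_valuation E x h"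
  have large: "h + S \<le> max_eval T ?\<sigma>"
    using below sl_eval_A_peak_valuation[OF \<open>x \<in> E\<close> \<open>0 < h\<close>] by metis
  moreover from this \<open>0 < h\<close> have "0 < max_eval T ?\<sigma>" by linarith
  ultimately obtain u where "u \<in> T" and "sl_eval u ?\<sigma> = max_eval T ?\<sigma>"
    using max_eval_attained[OF \<open>finite T\<close>] by metis
  with large obtain E' S' where "u = A E' x S'" "E' \<subseteq> E" "S \<le> S'"
    using peak_valuation_large_imp_A assms(2,3) const_lt by metis
  with \<open>u \<in> T\<close> that show ?thesis by blast
qed

lemma sl_le_A_A: "E' \<subseteq> E \<Longrightarrow> S \<le> S' \<Longrightarrow> sl_le (A E x S) (A E' x S')"
  unfolding sl_le_def by (fastforce simp: subset_eq)

lemma in_Lr_sl_le_imp_eq: "in_Lr T \<Longrightarrow> u \<in> T \<Longrightarrow> v \<in> T \<Longrightarrow> sl_le u v \<Longrightarrow> u = v"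
  unfolding in_Lr_def incomparable_def by blast

lemma in_Lr_A_mem_imp_mem: "in_Lr T \<Longrightarrow> A E x S \<in> T \<Longrightarrow> x \<in> E"
  unfolding in_Lr_def in_Ls_def by fastforce

lemma Lr_eq_A_mem_imp_dominating_A:
  assumes "in_Lr T" and "in_Lr T'" and "Lr_eq T T'" and "A E x S \<in> T"
  obtains E' S' where "A E' x S' \<in> T'" and "E' \<subseteq> E" and "S \<le> S'"
proof (rule A_below_max_eval_imp_dominating_A)
  show "finite T'" "\<forall>u\<in>T'. in_Ls u" using \<open>in_Lr T'\<close> by (simp_all add: in_Lr_def)
  show "x \<in> E" using assms(1,4) by (rule in_Lr_A_mem_imp_mem)
  show "\<forall>\<sigma>. sl_eval (A E x S) \<sigma> \<le> max_eval T' \<sigma>"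
    using assms sl_eval_le_max_eval unfolding in_Lr_def Lr_eq_def by metis
qed (use that in blast)

lemma Lr_eq_A_mem:
  assumes "in_Lr t1" and "in_Lr t2" and "Lr_eq t1 t2" and A_mem: "A E x S \<in> t1"
  shows "A E x S \<in> t2"
proof -
  obtain E' S' where A': "A E' x S' \<in> t2" "E' \<subseteq> E" "S \<le> S'"
    using Lr_eq_A_mem_imp_dominating_A[OF assms] .
  obtain E'' S'' where A'': "A E'' x S'' \<in> t1" "E'' \<subseteq> E'" "S' \<le> S''"
    using Lr_eq_A_mem_imp_dominating_A[OF assms(2,1) Lr_eq_sym[OF assms(3)] A'(1)] .
  have "sl_le (A E x S) (A E'' x S'')"
    using A' A'' by (intro sl_le_A_A) auto
  then have "A E x S = A E'' x S''"
    using in_Lr_sl_le_imp_eq[OF assms(1) A_mem A''(1)] by blast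
  then show ?thesis using A' A'' by auto
qed

theorem proposition31:
  fixes t1 t2 :: "('x::countable) sublevel set"
  assumes "in_Lr t1" and "in_Lr t2" and "Lr_eq t1 t2"
  shows "\<forall>E x S. finite E \<longrightarrow> (A E x S \<in> t1 \<longleftrightarrow> A E x S \<in> t2)"
  using Lr_eq_A_mem[OF assms] Lr_eq_A_mem[OF assms(2,1) Lr_eq_sym[OF assms(3)]] by blast

end
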